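(* Let $(\mathcal P,\cdot,[-,\dots,-])$ be a Poisson $n$-Lie algebra and let $\widetilde{\mathcal P}=\otimes^{n-1}\mathcal P$ be equipped with the componentwise product $(x_1\otimes\cdots\otimes x_{n-1})\cdot(y_1\otimes\cdots\otimes y_{n-1})=x_1y_1\otimes\cdots\otimes x_{n-1}y_{n-1}$ and with the bilinear bracket defined on pure tensors $x=x_1\otimes\cdots\otimes x_{n-1}$, $y=y_1\otimes\cdots\otimes y_{n-1}$ by $$[x,y]_\otimes=\sum_{i=1}^{n-1}y_1\otimes\cdots\otimes[x_1,\dots,x_{n-1},y_i]\otimes\cdots\otimes y_{n-1}.$$ Let $\mathcal J$ be the ideal of $\widetilde{\mathcal P}$ with respect to both operations $\cdot$ and $[-,-]_\otimes$ generated by all elements $[x,y]_\otimes+[y,x]_\otimes$, $x,y\in\otimes^{n-1}\mathcal P$. Then $(\widetilde{\mathcal P}/\mathcal J,\cdot,[-,-]_\otimes)$ with the induced operations is a Poisson algebra.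
   Context: A Poisson $n$-Lie algebra is a commutative associative algebra $(\mathcal P,\cdot)$ with an $n$-linear skew-symmetric bracket satisfying the fundamental identity $[x_1,\dots,x_{n-1},[y_1,\dots,y_n]]=\sum_{i=1}^n[y_1,\dots,[x_1,\dots,x_{n-1},y_i],\dots,y_n]$ and the Leibniz rule $[y\cdot z,x_2,\dots,x_n]=y\cdot[z,x_2,\dots,x_n]+z\cdot[y,x_2,\dots,x_n]$. A Poisson algebra is a commutative associative algebra with a Lie bracket $[-,-]$ satisfying $[x,y\cdot z]=[x,y]\cdot z+y\cdot[x,z]$. *)

theory Defs
  imports Main "HOL-Library.Poly_Mapping"
begin

definition multilinear_list :: "('k::field \<Rightarrow> 'p::ab_group_add \<Rightarrow> 'p) \<Rightarrow> nat \<Rightarrow> ('p list \<Rightarrow> 'p) \<Rightarrow> bool" where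
  "multilinear_list smul n br \<longleftrightarrow>
     (\<forall>xs i u v. length xs = n \<longrightarrow> i < n \<longrightarrow> br (xs[i := u + v]) = br (xs[i := u]) + br (xs[i := v])) \<and>
     (\<forall>xs i c u. length xs = n \<longrightarrow> i < n \<longrightarrow> br (xs[i := smul c u]) = smul c (br (xs[i := u])))"

definition skew_list :: "nat \<Rightarrow> ('p::ab_group_add list \<Rightarrow> 'p) \<Rightarrow> bool" where
  "skew_list n br \<longleftrightarrow>
     (\<forall>xs i j. length xs = n \<longrightarrow> i < n \<longrightarrow> j < n \<longrightarrow> i \<noteq> j \<longrightarrow>
        br (xs[i := xs ! j, j := xs ! i]) = - br xs)"

definition poisson_nlie :: "('k::field \<Rightarrow> 'p::ab_group_add \<Rightarrow> 'p) \<Rightarrow> ('p \<Rightarrow> 'p \<Rightarrow> 'p) \<Rightarrow> nat \<Rightarrow> ('p list \<Rightarrow> 'p) \<Rightarrow> bool" where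
  "poisson_nlie smul mul n br \<longleftrightarrow>
     \<comment> \<open>k-vector space axioms for smul\<close>
     (\<forall>a x y. smul a (x + y) = smul a x + smul a y) \<and>
     (\<forall>a b x. smul (a + b) x = smul a x + smul b x) \<and>
     (\<forall>a b x. smul a (smul b x) = smul (a * b) x) \<and>
     (\<forall>x. smul 1 x = x) \<and>
     (\<forall>x y z. mul (x + y) z = mul x z + mul y z) \<and>
     (\<forall>c x y. mul (smul c x) y = smul c (mul x y)) \<and>
     (\<forall>x y. mul x y = mul y x) \<and>
     (\<forall>x y z. mul (mul x y) z = mul x (mul y z)) \<and>
     multilinear_list smul n br \<and>
     skew_list n br \<and>
     \<comment> \<open>fundamental identity\<close>
     (\<forall>xs ys. length xs = n - 1 \<longrightarrow> length ys = n \<longrightarrow>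
        br (xs @ [br ys]) = (\<Sum>i<n. br (ys[i := br (xs @ [ys ! i])]))) \<and>
     \<comment> \<open>Leibniz rule in the first argument\<close>
     (\<forall>y z xs. length xs = n - 1 \<longrightarrow>
        br (mul y z # xs) = mul y (br (z # xs)) + mul z (br (y # xs)))"

definition poisson_algebra_on ::
  "'a set \<Rightarrow> 'a \<Rightarrow> ('a \<Rightarrow> 'a \<Rightarrow> 'a) \<Rightarrow> ('a \<Rightarrow> 'a) \<Rightarrow> ('k::field \<Rightarrow> 'a \<Rightarrow> 'a)
    \<Rightarrow> ('a \<Rightarrow> 'a \<Rightarrow> 'a) \<Rightarrow> ('a \<Rightarrow> 'a \<Rightarrow> 'a) \<Rightarrow> bool" where
  "poisson_algebra_on A z add neg sc mul br \<longleftrightarrow>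
     \<comment> \<open>vector space over 'k\<close>
     z \<in> A \<and>
     (\<forall>x\<in>A. \<forall>y\<in>A. add x y \<in> A) \<and> (\<forall>x\<in>A. neg x \<in> A) \<and> (\<forall>c. \<forall>x\<in>A. sc c x \<in> A) \<and>
     (\<forall>x\<in>A. \<forall>y\<in>A. \<forall>w\<in>A. add (add x y) w = add x (add y w)) \<and>
     (\<forall>x\<in>A. \<forall>y\<in>A. add x y = add y x) \<and>
     (\<forall>x\<in>A. add z x = x) \<and> (\<forall>x\<in>A. add (neg x) x = z) \<and>
     (\<forall>a b. \<forall>x\<in>A. sc (a + b) x = add (sc a x) (sc b x)) \<and>
     (\<forall>a. \<forall>x\<in>A. \<forall>y\<in>A. sc a (add x y) = add (sc a x) (sc a y)) \<and>
     (\<forall>a b. \<forall>x\<in>A. sc a (sc b x) = sc (a * b) x) \<and>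
     (\<forall>x\<in>A. sc 1 x = x) \<and>
     \<comment> \<open>commutative associative algebra (bilinear product)\<close>
     (\<forall>x\<in>A. \<forall>y\<in>A. mul x y \<in> A) \<and>
     (\<forall>x\<in>A. \<forall>y\<in>A. \<forall>w\<in>A. mul (add x y) w = add (mul x w) (mul y w)) \<and>
     (\<forall>c. \<forall>x\<in>A. \<forall>y\<in>A. mul (sc c x) y = sc c (mul x y)) \<and>
     (\<forall>x\<in>A. \<forall>y\<in>A. mul x y = mul y x) \<and>
     (\<forall>x\<in>A. \<forall>y\<in>A. \<forall>w\<in>A. mul (mul x y) w = mul x (mul y w)) \<and>
     \<comment> \<open>Lie algebra (bilinear, skew-symmetric, Jacobi)\<close>
     (\<forall>x\<in>A. \<forall>y\<in>A. br x y \<in> A) \<and>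
     (\<forall>x\<in>A. \<forall>y\<in>A. \<forall>w\<in>A. br (add x y) w = add (br x w) (br y w)) \<and>
     (\<forall>c. \<forall>x\<in>A. \<forall>y\<in>A. br (sc c x) y = sc c (br x y)) \<and>
     (\<forall>x\<in>A. \<forall>y\<in>A. br x y = neg (br y x)) \<and>
     (\<forall>x\<in>A. \<forall>y\<in>A. \<forall>w\<in>A. add (br x (br y w)) (add (br y (br w x)) (br w (br x y))) = z) \<and>
     \<comment> \<open>Leibniz rule\<close>
     (\<forall>x\<in>A. \<forall>y\<in>A. \<forall>w\<in>A. br x (mul y w) = add (mul (br x y) w) (mul y (br x w)))"

section \<open>The tensor power \<open>\<otimes>\<^sup>m P\<close> as a quotient of the free vector space on m-tuples\<close>

text \<open>Formal 'k-linear combinations of lists of elements of P; the basis element of the list xs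
  stands for the pure tensor of its entries.\<close>

definition fsc :: "'k::field \<Rightarrow> ('p \<Rightarrow>\<^sub>0 'k) \<Rightarrow> ('p \<Rightarrow>\<^sub>0 'k)" where
  "fsc c F = Poly_Mapping.map (\<lambda>a. c * a) F"

definition bas :: "'p list \<Rightarrow> ('p list \<Rightarrow>\<^sub>0 'k::field)" where
  "bas xs = Poly_Mapping.single xs 1"

definition free_tensors :: "nat \<Rightarrow> ('p list \<Rightarrow>\<^sub>0 'k::field) set" where
  "free_tensors m = {F. \<forall>xs\<in>Poly_Mapping.keys F. length xs = m}"

definition bilin_ext :: "('p list \<Rightarrow> 'p list \<Rightarrow> ('p list \<Rightarrow>\<^sub>0 'k::field))
    \<Rightarrow> ('p list \<Rightarrow>\<^sub>0 'k) \<Rightarrow> ('p list \<Rightarrow>\<^sub>0 'k) \<Rightarrow> ('p list \<Rightarrow>\<^sub>0 'k)" where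
  "bilin_ext f F G = (\<Sum>a\<in>Poly_Mapping.keys F. \<Sum>b\<in>Poly_Mapping.keys G. fsc (Poly_Mapping.lookup F a * Poly_Mapping.lookup G b) (f a b))"

definition tprod :: "('p \<Rightarrow> 'p \<Rightarrow> 'p) \<Rightarrow> ('p list \<Rightarrow>\<^sub>0 'k::field) \<Rightarrow> ('p list \<Rightarrow>\<^sub>0 'k) \<Rightarrow> ('p list \<Rightarrow>\<^sub>0 'k)" where
  "tprod mul = bilin_ext (\<lambda>xs ys. bas (map2 mul xs ys))"

definition tbr :: "nat \<Rightarrow> ('p list \<Rightarrow> 'p) \<Rightarrow> ('p list \<Rightarrow>\<^sub>0 'k::field) \<Rightarrow> ('p list \<Rightarrow>\<^sub>0 'k) \<Rightarrow> ('p list \<Rightarrow>\<^sub>0 'k)" where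
  "tbr n br = bilin_ext (\<lambda>xs ys. \<Sum>i<n - 1. bas (ys[i := br (xs @ [ys ! i])]))"

text \<open>Multilinearity relations; the tensor power is the free space modulo their span.\<close>
definition tensor_relations :: "('k::field \<Rightarrow> 'p::ab_group_add \<Rightarrow> 'p) \<Rightarrow> nat \<Rightarrow> ('p list \<Rightarrow>\<^sub>0 'k) set" where
  "tensor_relations smul m =
     {bas (xs[i := u + v]) - bas (xs[i := u]) - bas (xs[i := v]) | xs i u v. length xs = m \<and> i < m} \<union>
     {bas (xs[i := smul c u]) - fsc c (bas (xs[i := u])) | xs i c u. length xs = m \<and> i < m}"

definition two_op_ideal :: "('p list \<Rightarrow>\<^sub>0 'k::field) set \<Rightarrow> ('p list \<Rightarrow>\<^sub>0 'k) set
     \<Rightarrow> (('p list \<Rightarrow>\<^sub>0 'k) \<Rightarrow> ('p list \<Rightarrow>\<^sub>0 'k) \<Rightarrow> ('p list \<Rightarrow>\<^sub>0 'k))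
     \<Rightarrow> (('p list \<Rightarrow>\<^sub>0 'k) \<Rightarrow> ('p list \<Rightarrow>\<^sub>0 'k) \<Rightarrow> ('p list \<Rightarrow>\<^sub>0 'k)) \<Rightarrow> bool" where
  "two_op_ideal A S mul br \<longleftrightarrow> S \<subseteq> A \<and> 0 \<in> S \<and>
     (\<forall>x\<in>S. \<forall>y\<in>S. x + y \<in> S) \<and> (\<forall>c. \<forall>x\<in>S. fsc c x \<in> S) \<and>
     (\<forall>a\<in>A. \<forall>x\<in>S. mul a x \<in> S \<and> mul x a \<in> S \<and> br a x \<in> S \<and> br x a \<in> S)"

definition generated_ideal :: "('p list \<Rightarrow>\<^sub>0 'k::field) set \<Rightarrow> ('p list \<Rightarrow>\<^sub>0 'k) set
     \<Rightarrow> (('p list \<Rightarrow>\<^sub>0 'k) \<Rightarrow> ('p list \<Rightarrow>\<^sub>0 'k) \<Rightarrow> ('p list \<Rightarrow>\<^sub>0 'k))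
     \<Rightarrow> (('p list \<Rightarrow>\<^sub>0 'k) \<Rightarrow> ('p list \<Rightarrow>\<^sub>0 'k) \<Rightarrow> ('p list \<Rightarrow>\<^sub>0 'k)) \<Rightarrow> ('p list \<Rightarrow>\<^sub>0 'k) set" where
  "generated_ideal A G mul br = \<Inter>{S. two_op_ideal A S mul br \<and> G \<subseteq> S}"

text \<open>The preimage in the free space of the ideal J of the tensor power: the ideal generated by
  the multilinearity relations together with all [x,y] + [y,x].\<close>
definition J_ideal :: "('k::field \<Rightarrow> 'p::ab_group_add \<Rightarrow> 'p) \<Rightarrow> ('p \<Rightarrow> 'p \<Rightarrow> 'p) \<Rightarrow> nat \<Rightarrow> ('p list \<Rightarrow> 'p)
     \<Rightarrow> ('p list \<Rightarrow>\<^sub>0 'k) set" where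
  "J_ideal smul mul n br =
     generated_ideal (free_tensors (n - 1))
       (tensor_relations smul (n - 1) \<union>
        {tbr n br x y + tbr n br y x | x y. x \<in> free_tensors (n - 1) \<and> y \<in> free_tensors (n - 1)})
       (tprod mul) (tbr n br)"

definition coset :: "('p list \<Rightarrow>\<^sub>0 'k::field) set \<Rightarrow> ('p list \<Rightarrow>\<^sub>0 'k) \<Rightarrow> ('p list \<Rightarrow>\<^sub>0 'k) set" where
  "coset I x = {x + j | j. j \<in> I}"

definition quot :: "('p list \<Rightarrow>\<^sub>0 'k::field) set \<Rightarrow> ('p list \<Rightarrow>\<^sub>0 'k) set \<Rightarrow> ('p list \<Rightarrow>\<^sub>0 'k) set set" where
  "quot A I = coset I ` A"

definition rep :: "('p list \<Rightarrow>\<^sub>0 'k::field) set \<Rightarrow> ('p list \<Rightarrow>\<^sub>0 'k)" where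
  "rep X = (SOME x. x \<in> X)"

definition qop2 :: "('p list \<Rightarrow>\<^sub>0 'k::field) set \<Rightarrow> (('p list \<Rightarrow>\<^sub>0 'k) \<Rightarrow> ('p list \<Rightarrow>\<^sub>0 'k) \<Rightarrow> ('p list \<Rightarrow>\<^sub>0 'k))
     \<Rightarrow> ('p list \<Rightarrow>\<^sub>0 'k) set \<Rightarrow> ('p list \<Rightarrow>\<^sub>0 'k) set \<Rightarrow> ('p list \<Rightarrow>\<^sub>0 'k) set" where
  "qop2 I f X Y = coset I (f (rep X) (rep Y))"

definition qneg :: "('p list \<Rightarrow>\<^sub>0 'k::field) set \<Rightarrow> ('p list \<Rightarrow>\<^sub>0 'k) set \<Rightarrow> ('p list \<Rightarrow>\<^sub>0 'k) set" where
  "qneg I X = coset I (- rep X)"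

definition qsc :: "('p list \<Rightarrow>\<^sub>0 'k::field) set \<Rightarrow> 'k \<Rightarrow> ('p list \<Rightarrow>\<^sub>0 'k) set \<Rightarrow> ('p list \<Rightarrow>\<^sub>0 'k) set" where
  "qsc I c X = coset I (fsc c (rep X))"

end

theory Submission
  imports Defs
begin

text \<open>
  All identities are verified on pure tensors and extended by multilinearity. The componentwise
  product is commutative and associative because the product of \<open>P\<close> is. On a pure tensor
  \<open>y\<close>, the bracket \<open>[x, y]\<^sub>\<otimes>\<close> applies the inner derivation
  \<open>ad x = [x\<^sub>1, \<dots>, x\<^sub>n\<^sub>-\<^sub>1, -]\<close> to one slot at a time. By the Leibniz rule of \<open>P\<close>
  this is a derivation of the componentwise product, and by the fundamental identity
  \<open>[x, -]\<^sub>\<otimes>\<close> is a derivation of \<open>[-, -]\<^sub>\<otimes>\<close>; both hold modulo the multilinearity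
  relations. Together with the skew-symmetry imposed by \<open>\<J>\<close> the derivation property is the
  Jacobi identity, and as \<open>\<J>\<close> is an ideal for both operations everything descends to the
  quotient.
\<close>

section \<open>Formal linear combinations\<close>

lemma lookup_fsc [simp]: "Poly_Mapping.lookup (fsc c F) k = c * Poly_Mapping.lookup F k"
  unfolding fsc_def by (simp add: Poly_Mapping.map.rep_eq when_def)

lemma fsc_add_right: "fsc c (F + G) = fsc c F + fsc c G"
  by (rule poly_mapping_eqI) (simp add: lookup_add algebra_simps)

lemma fsc_add_left: "fsc (a + b) F = fsc a F + fsc b F"
  by (rule poly_mapping_eqI) (simp add: lookup_add algebra_simps)

lemma fsc_fsc [simp]: "fsc a (fsc b F) = fsc (a * b) F"
  by (rule poly_mapping_eqI) simp

lemma fsc_one [simp]: "fsc 1 F = F"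
  by (rule poly_mapping_eqI) simp

lemma fsc_zero_left [simp]: "fsc 0 F = 0"
  by (rule poly_mapping_eqI) simp

lemma fsc_zero_right [simp]: "fsc c 0 = 0"
  by (rule poly_mapping_eqI) simp

lemma fsc_minus_one: "fsc (-1) F = - F"
  by (rule poly_mapping_eqI) (simp add: lookup_minus)

lemma fsc_diff_right: "fsc c (F - G) = fsc c F - fsc c G"
  by (rule poly_mapping_eqI) (simp add: lookup_minus algebra_simps)

lemma fsc_sum_right: "fsc c (sum f S) = (\<Sum>i\<in>S. fsc c (f i))"
  by (induction S rule: infinite_finite_induct) (auto simp: fsc_add_right)

lemma keys_fsc_subset: "Poly_Mapping.keys (fsc c F) \<subseteq> Poly_Mapping.keys F"
  by (auto simp: in_keys_iff)

lemma poly_mapping_eq_sum_fsc_bas: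
  "F = (\<Sum>a\<in>Poly_Mapping.keys F. fsc (Poly_Mapping.lookup F a) (bas a))"
proof -
  have "Poly_Mapping.lookup (\<Sum>a\<in>S. fsc (Poly_Mapping.lookup F a) (bas a)) b =
          (if b \<in> S then Poly_Mapping.lookup F b else 0)" if "finite S" for S b
    using that by (induction S rule: finite_induct) (auto simp: bas_def lookup_single lookup_add when_def)
  then show ?thesis
    by (intro poly_mapping_eqI) (fastforce simp: in_keys_iff)
qed

definition fsc_linear :: "(('a \<Rightarrow>\<^sub>0 'k::field) \<Rightarrow> ('b \<Rightarrow>\<^sub>0 'k)) \<Rightarrow> bool" where
  "fsc_linear g \<longleftrightarrow> (\<forall>x y. g (x + y) = g x + g y) \<and> (\<forall>c x. g (fsc c x) = fsc c (g x))"

definition fsc_bilinear :: "(('a \<Rightarrow>\<^sub>0 'k::field) \<Rightarrow> ('b \<Rightarrow>\<^sub>0 'k) \<Rightarrow> ('c \<Rightarrow>\<^sub>0 'k)) \<Rightarrow> bool" where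
  "fsc_bilinear f \<longleftrightarrow> (\<forall>y. fsc_linear (\<lambda>x. f x y)) \<and> (\<forall>x. fsc_linear (f x))"

lemma fsc_linear_add: "fsc_linear g \<Longrightarrow> g (x + y) = g x + g y"
  unfolding fsc_linear_def by blast

lemma fsc_linear_fsc: "fsc_linear g \<Longrightarrow> g (fsc c x) = fsc c (g x)"
  unfolding fsc_linear_def by blast

lemma fsc_linear_zero: "fsc_linear g \<Longrightarrow> g 0 = 0"
  using fsc_linear_fsc[of g 0 0] by simp

lemma fsc_linear_minus: "fsc_linear g \<Longrightarrow> g (- x) = - g x"
  using fsc_linear_fsc[of g "-1" x] by (simp add: fsc_minus_one)

lemma fsc_linear_diff: "fsc_linear g \<Longrightarrow> g (x - y) = g x - g y"
  using fsc_linear_add[of g x "- y"] by (simp add: fsc_linear_minus)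

lemma fsc_linear_sum: "fsc_linear g \<Longrightarrow> g (sum h S) = (\<Sum>i\<in>S. g (h i))"
  by (induction S rule: infinite_finite_induct) (auto simp: fsc_linear_zero fsc_linear_add)

lemmas fsc_linear_simps =
  fsc_linear_add fsc_linear_fsc fsc_linear_zero fsc_linear_minus fsc_linear_diff fsc_linear_sum

lemma fsc_bilinear_left: "fsc_bilinear f \<Longrightarrow> fsc_linear (\<lambda>x. f x y)"
  unfolding fsc_bilinear_def by blast

lemma fsc_bilinear_right: "fsc_bilinear f \<Longrightarrow> fsc_linear (f x)"
  unfolding fsc_bilinear_def by blast

lemmas fsc_bilinear_simps =
  fsc_linear_simps[OF fsc_bilinear_left] fsc_linear_simps[OF fsc_bilinear_right]

lemma bilin_ext_swap: "bilin_ext f F G = bilin_ext (\<lambda>b a. f a b) G F"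
  unfolding bilin_ext_def by (subst sum.swap) (simp add: mult.commute)

lemma bilin_ext_eq_sum_superset:
  assumes "finite S" "Poly_Mapping.keys F \<subseteq> S"
  shows "bilin_ext f F G =
    (\<Sum>a\<in>S. \<Sum>b\<in>Poly_Mapping.keys G. fsc (Poly_Mapping.lookup F a * Poly_Mapping.lookup G b) (f a b))"
  unfolding bilin_ext_def
  by (rule sum.mono_neutral_left) (use assms in \<open>auto simp: in_keys_iff\<close>)

lemma fsc_linear_bilin_ext_left: "fsc_linear (\<lambda>F. bilin_ext f F G)"
proof -
  let ?t = "\<lambda>F a b. fsc (Poly_Mapping.lookup F a * Poly_Mapping.lookup G b) (f a b)"
  have "bilin_ext f (F + F') G = bilin_ext f F G + bilin_ext f F' G" for F F'
  proof -
    let ?S = "Poly_Mapping.keys F \<union> Poly_Mapping.keys F'"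
    have "bilin_ext f (F + F') G = (\<Sum>a\<in>?S. \<Sum>b\<in>Poly_Mapping.keys G. ?t (F + F') a b)"
      by (rule bilin_ext_eq_sum_superset) (auto simp: keys_add)
    also have "\<dots> = (\<Sum>a\<in>?S. \<Sum>b\<in>Poly_Mapping.keys G. ?t F a b) + (\<Sum>a\<in>?S. \<Sum>b\<in>Poly_Mapping.keys G. ?t F' a b)"
      by (simp add: lookup_add distrib_right fsc_add_left sum.distrib)
    also have "\<dots> = bilin_ext f F G + bilin_ext f F' G"
      by (subst (1 2) bilin_ext_eq_sum_superset[of ?S]) auto
    finally show ?thesis .
  qed
  moreover have "bilin_ext f (fsc c F) G = fsc c (bilin_ext f F G)" for c F
  proof -
    have "bilin_ext f (fsc c F) G = (\<Sum>a\<in>Poly_Mapping.keys F. \<Sum>b\<in>Poly_Mapping.keys G. ?t (fsc c F) a b)"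
      by (rule bilin_ext_eq_sum_superset) (auto simp: keys_fsc_subset)
    then show ?thesis
      by (simp add: bilin_ext_def fsc_sum_right mult.assoc)
  qed
  ultimately show ?thesis
    unfolding fsc_linear_def by blast
qed

lemma fsc_bilinear_bilin_ext: "fsc_bilinear (bilin_ext f)"
proof -
  have "bilin_ext f F = (\<lambda>G. bilin_ext (\<lambda>b a. f a b) G F)" for F
    by (rule ext) (rule bilin_ext_swap)
  then show ?thesis
    unfolding fsc_bilinear_def using fsc_linear_bilin_ext_left by metis
qed

lemma bilin_ext_bas [simp]: "bilin_ext f (bas a) (bas b) = f a b"
  by (simp add: bilin_ext_def bas_def)



definition fsc_subspace :: "('a \<Rightarrow>\<^sub>0 'k::field) set \<Rightarrow> bool" where
  "fsc_subspace S \<longleftrightarrow> 0 \<in> S \<and> (\<forall>x\<in>S. \<forall>y\<in>S. x + y \<in> S) \<and> (\<forall>c. \<forall>x\<in>S. fsc c x \<in> S)"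

lemma fsc_subspace_0: "fsc_subspace S \<Longrightarrow> 0 \<in> S"
  unfolding fsc_subspace_def by blast

lemma fsc_subspace_add: "fsc_subspace S \<Longrightarrow> x \<in> S \<Longrightarrow> y \<in> S \<Longrightarrow> x + y \<in> S"
  unfolding fsc_subspace_def by blast

lemma fsc_subspace_fsc: "fsc_subspace S \<Longrightarrow> x \<in> S \<Longrightarrow> fsc c x \<in> S"
  unfolding fsc_subspace_def by blast

lemma fsc_subspace_neg: "fsc_subspace S \<Longrightarrow> x \<in> S \<Longrightarrow> - x \<in> S"
  using fsc_subspace_fsc[of S x "-1"] by (simp add: fsc_minus_one)

lemma fsc_subspace_diff: "fsc_subspace S \<Longrightarrow> x \<in> S \<Longrightarrow> y \<in> S \<Longrightarrow> x - y \<in> S"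
  unfolding diff_conv_add_uminus by (intro fsc_subspace_add fsc_subspace_neg)

lemma fsc_subspace_sum: "fsc_subspace S \<Longrightarrow> (\<And>i. i \<in> I \<Longrightarrow> f i \<in> S) \<Longrightarrow> sum f I \<in> S"
  by (induction I rule: infinite_finite_induct) (auto intro: fsc_subspace_0 fsc_subspace_add)

lemma fsc_subspace_single_0: "fsc_subspace {0}"
  by (simp add: fsc_subspace_def)

lemma fsc_subspace_free_tensors: "fsc_subspace (free_tensors m)"
  unfolding fsc_subspace_def free_tensors_def
  using keys_add keys_fsc_subset by fastforce

lemma bas_in_free_tensors [simp]: "length xs = m \<Longrightarrow> bas xs \<in> free_tensors m"
  by (simp add: free_tensors_def bas_def)

lemma bilin_ext_in_free_tensors:
  assumes "F \<in> free_tensors m" "G \<in> free_tensors m"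
    and "\<And>a b. length a = m \<Longrightarrow> length b = m \<Longrightarrow> f a b \<in> free_tensors m"
  shows "bilin_ext f F G \<in> free_tensors m"
  unfolding bilin_ext_def using assms
  by (intro fsc_subspace_sum fsc_subspace_fsc fsc_subspace_free_tensors assms(3))
     (auto simp: free_tensors_def)

lemma free_tensors_induct [consumes 1, case_names zero bas add fsc]:
  assumes "F \<in> free_tensors m" "P 0" "\<And>a. length a = m \<Longrightarrow> P (bas a)"
    and "\<And>x y. P x \<Longrightarrow> P y \<Longrightarrow> P (x + y)" "\<And>c x. P x \<Longrightarrow> P (fsc c x)"
  shows "P F"
proof -
  have "P (\<Sum>a\<in>S. fsc (Poly_Mapping.lookup F a) (bas a))"
    if "finite S" "S \<subseteq> Poly_Mapping.keys F" for S
    using that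
  proof (induction S rule: finite_induct)
    case (insert a S)
    then have "length a = m"
      using assms(1) by (auto simp: free_tensors_def)
    with insert assms show ?case by simp
  qed (simp add: assms(2))
  from this[OF finite_keys order_refl] show ?thesis
    by (simp only: poly_mapping_eq_sum_fsc_bas[symmetric])
qed

lemma fsc_linear_mem_free_tensors:
  assumes "fsc_subspace J" "fsc_linear g" "\<And>a. length a = m \<Longrightarrow> g (bas a) \<in> J"
    and "x \<in> free_tensors m"
  shows "g x \<in> J"
  using assms(4)
proof (induction rule: free_tensors_induct)
  case zero
  show ?case using assms(1,2) by (simp add: fsc_linear_zero fsc_subspace_0)
next
  case (add x y)
  then show ?case using assms(1,2) by (simp add: fsc_linear_add fsc_subspace_add)
next
  case (fsc c x)
  then show ?case using assms(1,2) by (simp add: fsc_linear_fsc fsc_subspace_fsc)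
qed (rule assms(3))

lemma fsc_bilinear_mem_free_tensors:
  fixes E :: "('a list \<Rightarrow>\<^sub>0 'k::field) \<Rightarrow> ('a list \<Rightarrow>\<^sub>0 'k) \<Rightarrow> ('b \<Rightarrow>\<^sub>0 'k)"
  assumes J: "fsc_subspace J" and E: "fsc_bilinear E"
    and base: "\<And>a b. length a = m \<Longrightarrow> length b = m \<Longrightarrow> E (bas a) (bas b) \<in> J"
    and x: "x \<in> free_tensors m" and y: "y \<in> free_tensors m"
  shows "E x y \<in> J"
proof (rule fsc_linear_mem_free_tensors[OF J fsc_bilinear_left[OF E] _ x])
  fix a :: "'a list" assume "length a = m"
  then show "E (bas a) y \<in> J"
    by (intro fsc_linear_mem_free_tensors[OF J fsc_bilinear_right[OF E] _ y] base)
qed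

lemma fsc_trilinear_mem_free_tensors:
  fixes E :: "('a list \<Rightarrow>\<^sub>0 'k::field) \<Rightarrow> ('a list \<Rightarrow>\<^sub>0 'k) \<Rightarrow> ('a list \<Rightarrow>\<^sub>0 'k) \<Rightarrow> ('b \<Rightarrow>\<^sub>0 'k)"
  assumes J: "fsc_subspace J" and E1: "\<And>y w. fsc_linear (\<lambda>x. E x y w)" and E23: "\<And>x. fsc_bilinear (E x)"
    and base: "\<And>a b d. length a = m \<Longrightarrow> length b = m \<Longrightarrow> length d = m \<Longrightarrow> E (bas a) (bas b) (bas d) \<in> J"
    and x: "x \<in> free_tensors m" and y: "y \<in> free_tensors m" and w: "w \<in> free_tensors m"
  shows "E x y w \<in> J"
proof (rule fsc_linear_mem_free_tensors[OF J E1 _ x])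
  fix a :: "'a list" assume "length a = m"
  then show "E (bas a) y w \<in> J"
    by (intro fsc_bilinear_mem_free_tensors[OF J E23 _ y w] base)
qed

section \<open>The product and the bracket on tensors\<close>

definition slotwise :: "('p \<Rightarrow> 'p) \<Rightarrow> 'p list \<Rightarrow> ('p list \<Rightarrow>\<^sub>0 'k::field)" where
  "slotwise D ys = (\<Sum>i<length ys. bas (ys[i := D (ys ! i)]))"

lemma tprod_bas: "tprod mul (bas a) (bas b) = bas (map2 mul a b)"
  by (simp add: tprod_def)

lemma tbr_bas: "length ys = n - 1 \<Longrightarrow> tbr n br (bas xs) (bas ys) = slotwise (\<lambda>t. br (xs @ [t])) ys"
  by (simp add: tbr_def slotwise_def)

lemma fsc_bilinear_tprod: "fsc_bilinear (tprod mul)"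
  unfolding tprod_def by (rule fsc_bilinear_bilin_ext)

lemma fsc_bilinear_tbr: "fsc_bilinear (tbr n br)"
  unfolding tbr_def by (rule fsc_bilinear_bilin_ext)

lemmas tprod_linear = fsc_bilinear_simps[OF fsc_bilinear_tprod]
lemmas tbr_linear = fsc_bilinear_simps[OF fsc_bilinear_tbr]

lemma two_op_ideal_free_tensors: "two_op_ideal (free_tensors m) (free_tensors m) (tprod mul) (tbr n br)"
proof -
  have closed: "tprod mul x y \<in> free_tensors m" "tbr n br x y \<in> free_tensors m"
    if "x \<in> free_tensors m" "y \<in> free_tensors m" for x y
    unfolding tprod_def tbr_def
    by (intro bilin_ext_in_free_tensors[OF that] fsc_subspace_sum[OF fsc_subspace_free_tensors]; simp)+
  show ?thesis
    unfolding two_op_ideal_def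
    by (auto intro: closed fsc_subspace_0 fsc_subspace_add fsc_subspace_fsc fsc_subspace_free_tensors)
qed

lemma tprod_commute:
  assumes "\<And>x y. mul x y = mul y x"
  shows "tprod mul F G = tprod mul G F"
proof -
  have swap: "(\<lambda>b a. bas (map2 mul a b)) = (\<lambda>a b. bas (map2 mul a b))"
    by (intro ext arg_cong[where f = bas] nth_equalityI) (simp_all add: assms)
  show ?thesis
    unfolding tprod_def by (subst bilin_ext_swap) (simp only: swap)
qed

lemma tprod_assoc:
  assumes "\<And>x y z. mul (mul x y) z = mul x (mul y z)"
    and "F \<in> free_tensors m" "G \<in> free_tensors m" "H \<in> free_tensors m"
  shows "tprod mul (tprod mul F G) H = tprod mul F (tprod mul G H)"
proof -
  have assoc_bas: "map2 mul (map2 mul a b) d = map2 mul a (map2 mul b d)" for a b d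
    by (rule nth_equalityI) (simp_all add: assms(1))
  have "tprod mul (tprod mul F G) H - tprod mul F (tprod mul G H) \<in> {0}"
  proof (rule fsc_trilinear_mem_free_tensors[OF fsc_subspace_single_0 _ _ _ assms(2-4)])
    show "fsc_linear (\<lambda>x. tprod mul (tprod mul x y) w - tprod mul x (tprod mul y w))" for y w
      unfolding fsc_linear_def by (simp add: tprod_linear fsc_diff_right)
    show "fsc_bilinear (\<lambda>y w. tprod mul (tprod mul x y) w - tprod mul x (tprod mul y w))" for x
      unfolding fsc_bilinear_def fsc_linear_def by (simp add: tprod_linear fsc_diff_right)
    show "tprod mul (tprod mul (bas a) (bas b)) (bas d) - tprod mul (bas a) (tprod mul (bas b) (bas d))
      \<in> {0}" for a b d
      by (simp add: tprod_bas assoc_bas)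
  qed
  then show ?thesis by simp
qed

lemma map2_update_left:
  "length a = length b \<Longrightarrow> i < length a \<Longrightarrow> map2 f (a[i := x]) b = (map2 f a b)[i := f x (b ! i)]"
  by (rule nth_equalityI) (auto simp: nth_list_update)

lemma map2_update_right:
  "length a = length b \<Longrightarrow> i < length a \<Longrightarrow> map2 f a (b[i := x]) = (map2 f a b)[i := f (a ! i) x]"
  by (rule nth_equalityI) (auto simp: nth_list_update)

text \<open>The terms in which the two operators act on different slots cancel.\<close>

lemma slotwise_commutator:
  "(\<Sum>i<length ws. slotwise f (ws[i := g (ws ! i)])) - (\<Sum>i<length ws. slotwise g (ws[i := f (ws ! i)]))
     = (\<Sum>i<length ws. bas (ws[i := f (g (ws ! i))]) - bas (ws[i := g (f (ws ! i))])
        :: 'p list \<Rightarrow>\<^sub>0 'k::field)"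
proof -
  let ?m = "length ws"
  define L :: "nat \<Rightarrow> nat \<Rightarrow> 'p list \<Rightarrow>\<^sub>0 'k"
    where "L i j = bas ((ws[i := g (ws ! i)])[j := f ((ws[i := g (ws ! i)]) ! j)])" for i j
  define R :: "nat \<Rightarrow> nat \<Rightarrow> 'p list \<Rightarrow>\<^sub>0 'k"
    where "R i j = bas ((ws[j := f (ws ! j)])[i := g ((ws[j := f (ws ! j)]) ! i)])" for i j
  define d :: "nat \<Rightarrow> 'p list \<Rightarrow>\<^sub>0 'k"
    where "d i = bas (ws[i := f (g (ws ! i))]) - bas (ws[i := g (f (ws ! i))])" for i
  have diagonal: "L i j - R i j = (if i = j then d i else 0)" if "i < ?m" "j < ?m" for i j
  proof (cases "i = j")
    case False
    then have "ws[i := g (ws ! i), j := f (ws ! j)] = ws[j := f (ws ! j), i := g (ws ! i)]"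
      by (rule list_update_swap)
    with False show ?thesis by (simp add: L_def R_def)
  qed (use that in \<open>simp add: L_def R_def d_def\<close>)
  have "(\<Sum>i<?m. slotwise g (ws[i := f (ws ! i)])) = (\<Sum>j<?m. \<Sum>i<?m. R i j)"
    by (simp add: slotwise_def R_def)
  also have "\<dots> = (\<Sum>i<?m. \<Sum>j<?m. R i j)"
    by (rule sum.swap)
  finally have R_sum: "(\<Sum>i<?m. slotwise g (ws[i := f (ws ! i)])) = (\<Sum>i<?m. \<Sum>j<?m. R i j)" .
  have "(\<Sum>i<?m. slotwise f (ws[i := g (ws ! i)])) - (\<Sum>i<?m. \<Sum>j<?m. R i j)
      = (\<Sum>i<?m. \<Sum>j<?m. L i j - R i j)"
    by (simp add: slotwise_def L_def sum_subtractf)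
  also have "\<dots> = (\<Sum>i<?m. \<Sum>j<?m. if i = j then d i else 0)"
    by (intro sum.cong refl) (simp add: diagonal)
  finally show ?thesis
    by (simp add: R_sum d_def)
qed

section \<open>Quotients by ideals for two operations\<close>

lemma two_op_ideal_fsc_subspace: "two_op_ideal A S mul br \<Longrightarrow> fsc_subspace S"
  unfolding two_op_ideal_def fsc_subspace_def by blast

lemma two_op_ideal_generated_ideal:
  assumes "two_op_ideal A A mul br" "G \<subseteq> A"
  shows "two_op_ideal A (generated_ideal A G mul br) mul br"
proof -
  have "A \<in> {S. two_op_ideal A S mul br \<and> G \<subseteq> S}"
    using assms by blast
  then show ?thesis
    unfolding generated_ideal_def two_op_ideal_def by (simp add: Inter_lower)
qed

lemma generated_ideal_superset: "G \<subseteq> generated_ideal A G mul br"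
  unfolding generated_ideal_def by blast

lemma fsc_bilinear_congruence:
  assumes "fsc_subspace I" "fsc_bilinear f"
    and "\<And>a x. a \<in> A \<Longrightarrow> x \<in> I \<Longrightarrow> f a x \<in> I" "\<And>a x. a \<in> A \<Longrightarrow> x \<in> I \<Longrightarrow> f x a \<in> I"
    and "x' \<in> A" "y \<in> A" "x - x' \<in> I" "y - y' \<in> I"
  shows "f x y - f x' y' \<in> I"
proof -
  have "f x y - f x' y' = f (x - x') y + f x' (y - y')"
    by (simp add: fsc_linear_diff[OF fsc_bilinear_left[OF assms(2)]]
        fsc_linear_diff[OF fsc_bilinear_right[OF assms(2)]])
  then show ?thesis
    using assms by (simp add: fsc_subspace_add)
qed

lemma coset_eq:
  assumes "fsc_subspace I" "u - v \<in> I"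
  shows "coset I u = coset I v"
proof -
  have "coset I u \<subseteq> coset I v" if "u - v \<in> I" for u v
  proof
    fix x assume "x \<in> coset I u"
    then obtain j where "j \<in> I" "x = u + j"
      unfolding coset_def by blast
    then have "(u - v) + j \<in> I" "x = v + ((u - v) + j)"
      using that fsc_subspace_add[OF assms(1)] by auto
    then show "x \<in> coset I v"
      unfolding coset_def by blast
  qed
  moreover have "v - u \<in> I"
    using fsc_subspace_neg[OF assms] by simp
  ultimately show ?thesis
    using assms(2) by blast
qed

lemma rep_coset_diff_mem:
  assumes "fsc_subspace I"
  shows "rep (coset I a) - a \<in> I"
proof -
  have "a \<in> coset I a"
    using fsc_subspace_0[OF assms] unfolding coset_def by force
  then have "rep (coset I a) \<in> coset I a"
    unfolding rep_def by (rule someI)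
  then show ?thesis
    unfolding coset_def by auto
qed

locale two_op_quotient =
  fixes A I :: "('p list \<Rightarrow>\<^sub>0 'k::field) set"
    and mul br :: "('p list \<Rightarrow>\<^sub>0 'k) \<Rightarrow> ('p list \<Rightarrow>\<^sub>0 'k) \<Rightarrow> ('p list \<Rightarrow>\<^sub>0 'k)"
  assumes subalgebra: "two_op_ideal A A mul br"
    and ideal: "two_op_ideal A I mul br"
    and bilinear: "fsc_bilinear mul" "fsc_bilinear br"
begin

lemma subspace_A: "fsc_subspace A"
  using subalgebra by (rule two_op_ideal_fsc_subspace)

lemma subspace_I: "fsc_subspace I"
  using ideal by (rule two_op_ideal_fsc_subspace)

lemma add_closed [simp]: "x \<in> A \<Longrightarrow> y \<in> A \<Longrightarrow> x + y \<in> A"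
  using subspace_A by (rule fsc_subspace_add)

lemma neg_closed [simp]: "x \<in> A \<Longrightarrow> - x \<in> A"
  using subspace_A by (rule fsc_subspace_neg)

lemma fsc_closed [simp]: "x \<in> A \<Longrightarrow> fsc c x \<in> A"
  using subspace_A by (rule fsc_subspace_fsc)

lemma mul_closed [simp]: "x \<in> A \<Longrightarrow> y \<in> A \<Longrightarrow> mul x y \<in> A"
  using subalgebra unfolding two_op_ideal_def by blast

lemma br_closed [simp]: "x \<in> A \<Longrightarrow> y \<in> A \<Longrightarrow> br x y \<in> A"
  using subalgebra unfolding two_op_ideal_def by blast

lemma mul_congruence:
  "x' \<in> A \<Longrightarrow> y \<in> A \<Longrightarrow> x - x' \<in> I \<Longrightarrow> y - y' \<in> I \<Longrightarrow> mul x y - mul x' y' \<in> I"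
  using ideal by (intro fsc_bilinear_congruence[OF subspace_I bilinear(1)]) (auto simp: two_op_ideal_def)

lemma br_congruence:
  "x' \<in> A \<Longrightarrow> y \<in> A \<Longrightarrow> x - x' \<in> I \<Longrightarrow> y - y' \<in> I \<Longrightarrow> br x y - br x' y' \<in> I"
  using ideal by (intro fsc_bilinear_congruence[OF subspace_I bilinear(2)]) (auto simp: two_op_ideal_def)

lemma rep_coset_mem:
  assumes "a \<in> A"
  shows "rep (coset I a) \<in> A"
proof -
  have "rep (coset I a) - a \<in> A"
    using rep_coset_diff_mem[OF subspace_I, of a] ideal unfolding two_op_ideal_def by blast
  then have "a + (rep (coset I a) - a) \<in> A"
    by (rule add_closed[OF assms])
  then show ?thesis by simp
qed

lemma qop2_coset:
  assumes "\<And>x x' y y'. x' \<in> A \<Longrightarrow> y \<in> A \<Longrightarrow> x - x' \<in> I \<Longrightarrow> y - y' \<in> I \<Longrightarrow> f x y - f x' y' \<in> I"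
    and "a \<in> A" "b \<in> A"
  shows "qop2 I f (coset I a) (coset I b) = coset I (f a b)"
  unfolding qop2_def
  by (intro coset_eq[OF subspace_I] assms rep_coset_diff_mem[OF subspace_I] rep_coset_mem)

lemma coset_ops [simp]:
  assumes "a \<in> A" "b \<in> A"
  shows "qop2 I (+) (coset I a) (coset I b) = coset I (a + b)"
    and "qop2 I mul (coset I a) (coset I b) = coset I (mul a b)"
    and "qop2 I br (coset I a) (coset I b) = coset I (br a b)"
    and "qneg I (coset I a) = coset I (- a)"
    and "qsc I c (coset I a) = coset I (fsc c a)"
proof -
  have "x + y - (x' + y') = (x - x') + (y - y')" for x y x' y' :: "'p list \<Rightarrow>\<^sub>0 'k"
    by simp
  then show "qop2 I (+) (coset I a) (coset I b) = coset I (a + b)"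
    using assms by (intro qop2_coset) (metis fsc_subspace_add[OF subspace_I])
  show "qop2 I mul (coset I a) (coset I b) = coset I (mul a b)"
    using mul_congruence assms by (rule qop2_coset)
  show "qop2 I br (coset I a) (coset I b) = coset I (br a b)"
    using br_congruence assms by (rule qop2_coset)
  show "qneg I (coset I a) = coset I (- a)"
    unfolding qneg_def using fsc_subspace_neg[OF subspace_I rep_coset_diff_mem[OF subspace_I, of a]]
    by (intro coset_eq[OF subspace_I]) (simp add: minus_diff_eq)
  show "qsc I c (coset I a) = coset I (fsc c a)"
    unfolding qsc_def using fsc_subspace_fsc[OF subspace_I rep_coset_diff_mem[OF subspace_I, of a]]
    by (intro coset_eq[OF subspace_I]) (simp add: fsc_diff_right)
qed

theorem poisson_algebra_on_quot:
  assumes comm: "\<And>x y. x \<in> A \<Longrightarrow> y \<in> A \<Longrightarrow> mul x y - mul y x \<in> I"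
    and assoc: "\<And>x y w. x \<in> A \<Longrightarrow> y \<in> A \<Longrightarrow> w \<in> A \<Longrightarrow> mul (mul x y) w - mul x (mul y w) \<in> I"
    and skew: "\<And>x y. x \<in> A \<Longrightarrow> y \<in> A \<Longrightarrow> br x y + br y x \<in> I"
    and jacobi: "\<And>x y w. x \<in> A \<Longrightarrow> y \<in> A \<Longrightarrow> w \<in> A \<Longrightarrow>
      br x (br y w) + (br y (br w x) + br w (br x y)) \<in> I"
    and leibniz: "\<And>x y w. x \<in> A \<Longrightarrow> y \<in> A \<Longrightarrow> w \<in> A \<Longrightarrow>
      br x (mul y w) - (mul (br x y) w + mul y (br x w)) \<in> I"
  shows "poisson_algebra_on (quot A I) (coset I 0) (qop2 I (+)) (qneg I) (qsc I) (qop2 I mul) (qop2 I br)"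
proof -
  have all_cosets: "(\<And>a. a \<in> A \<Longrightarrow> P (coset I a)) \<Longrightarrow> \<forall>X\<in>quot A I. P X" for P
    unfolding quot_def by blast
  have in_quot: "a \<in> A \<Longrightarrow> coset I a \<in> quot A I" for a
    unfolding quot_def by blast
  note linear = fsc_linear_add[OF fsc_bilinear_left[OF bilinear(1)]]
    fsc_linear_fsc[OF fsc_bilinear_left[OF bilinear(1)]]
    fsc_linear_add[OF fsc_bilinear_left[OF bilinear(2)]]
    fsc_linear_fsc[OF fsc_bilinear_left[OF bilinear(2)]]
  show ?thesis
    unfolding poisson_algebra_on_def
    \<comment> \<open>on cosets of representatives, each axiom either holds in the free space or, via
      \<open>coset_eq\<close>, is one of the assumptions\<close>
    apply (intro conjI all_cosets allI)
    apply (simp_all add: in_quot linear fsc_add_left fsc_add_right add.assoc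
        fsc_subspace_0[OF subspace_A])
    apply (rule coset_eq[OF subspace_I];
        simp add: comm assoc skew jacobi leibniz fsc_subspace_0[OF subspace_I])+
    done
qed

end

section \<open>Poisson n-Lie algebras\<close>

locale poisson_nlie_tensors =
  fixes smul :: "'k::field \<Rightarrow> 'p::ab_group_add \<Rightarrow> 'p"
    and mul :: "'p \<Rightarrow> 'p \<Rightarrow> 'p"
    and br :: "'p list \<Rightarrow> 'p"
    and n m :: nat
  assumes n_eq: "n = Suc m" and m_pos: "0 < m"
    and poisson: "poisson_nlie smul mul n br"
begin

lemma n_minus_one [simp]: "n - 1 = m" "n - Suc 0 = m"
  using n_eq by simp_all

abbreviation ad :: "'p list \<Rightarrow> 'p \<Rightarrow> 'p" where
  "ad xs t \<equiv> br (xs @ [t])"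

lemma mul_add_left: "mul (x + y) z = mul x z + mul y z"
  using poisson unfolding poisson_nlie_def by blast

lemma mul_commute: "mul x y = mul y x"
  using poisson unfolding poisson_nlie_def by blast

lemma mul_assoc: "mul (mul x y) z = mul x (mul y z)"
  using poisson unfolding poisson_nlie_def by blast

lemma br_swap:
  "length xs = n \<Longrightarrow> i < n \<Longrightarrow> j < n \<Longrightarrow> i \<noteq> j \<Longrightarrow> br (xs[i := xs ! j, j := xs ! i]) = - br xs"
  using poisson unfolding poisson_nlie_def skew_list_def by blast

lemma fundamental_identity:
  "length xs = m \<Longrightarrow> length ys = n \<Longrightarrow> ad xs (br ys) = (\<Sum>i<n. br (ys[i := ad xs (ys ! i)]))"
  using poisson unfolding poisson_nlie_def by simp

lemma leibniz_first:
  "length xs = m \<Longrightarrow> br (mul y z # xs) = mul y (br (z # xs)) + mul z (br (y # xs))"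
  using poisson unfolding poisson_nlie_def by simp

lemma mul_minus_right: "mul z (- y) = - mul z y"
proof -
  have "mul (- y) z + mul y z = 0"
    using mul_add_left[of "- y" y z] mul_add_left[of 0 0 z] by simp
  then show ?thesis
    by (simp add: mul_commute[of z] eq_neg_iff_add_eq_0)
qed

lemma br_swap_first_last:
  assumes "length xs = m"
  shows "ad xs t = - br (t # tl xs @ [hd xs])"
proof -
  obtain x xs' where xs: "xs = x # xs'"
    using assms m_pos by (cases xs) auto
  let ?L = "xs @ [t]"
  have "br (?L[0 := ?L ! m, m := ?L ! 0]) = - br ?L"
    by (rule br_swap) (use assms m_pos n_eq in auto)
  moreover have "?L[0 := ?L ! m, m := ?L ! 0] = t # tl xs @ [hd xs]"
  proof -
    have m: "m = Suc (length xs')"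
      using assms xs by simp
    show ?thesis
      unfolding m xs by (simp add: nth_append list_update_append)
  qed
  ultimately show ?thesis
    by (metis minus_minus)
qed

lemma leibniz_last:
  assumes "length xs = m"
  shows "ad xs (mul y z) = mul y (ad xs z) + mul z (ad xs y)"
proof -
  have "length (tl xs @ [hd xs]) = m"
    using assms m_pos by simp
  then show ?thesis
    by (simp add: br_swap_first_last[OF assms] leibniz_first mul_minus_right)
qed

text \<open>The fundamental identity with its last summand split off: \<open>ad xs\<close> is a derivation
  of the bracket in its last argument.\<close>

lemma fundamental_identity_last:
  assumes xs: "length xs = m" and ys: "length ys = m"
  shows "ad xs (ad ys w) = (\<Sum>k<m. ad (ys[k := ad xs (ys ! k)]) w) + ad ys (ad xs w)"
proof -
  have "ad xs (ad ys w) = (\<Sum>i<Suc m. br ((ys @ [w])[i := ad xs ((ys @ [w]) ! i)]))"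
    using fundamental_identity[OF xs, of "ys @ [w]"] ys n_eq by simp
  also have "\<dots> = (\<Sum>k<m. br ((ys @ [w])[k := ad xs ((ys @ [w]) ! k)])) + ad ys (ad xs w)"
    using ys by (simp add: list_update_append nth_append)
  also have "(\<Sum>k<m. br ((ys @ [w])[k := ad xs ((ys @ [w]) ! k)])) = (\<Sum>k<m. ad (ys[k := ad xs (ys ! k)]) w)"
    by (rule sum.cong) (use ys in \<open>auto simp: list_update_append nth_append\<close>)
  finally show ?thesis .
qed

abbreviation tensors :: "('p list \<Rightarrow>\<^sub>0 'k) set" where
  "tensors \<equiv> free_tensors m"

abbreviation \<J> :: "('p list \<Rightarrow>\<^sub>0 'k) set" where
  "\<J> \<equiv> J_ideal smul mul n br"

abbreviation T :: "('p list \<Rightarrow>\<^sub>0 'k) \<Rightarrow> ('p list \<Rightarrow>\<^sub>0 'k) \<Rightarrow> ('p list \<Rightarrow>\<^sub>0 'k)" where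
  "T \<equiv> tprod mul"

abbreviation B :: "('p list \<Rightarrow>\<^sub>0 'k) \<Rightarrow> ('p list \<Rightarrow>\<^sub>0 'k) \<Rightarrow> ('p list \<Rightarrow>\<^sub>0 'k)" where
  "B \<equiv> tbr n br"

lemma two_op_ideal_J: "two_op_ideal tensors \<J> T B"
proof -
  have "B x y + B y x \<in> tensors" if "x \<in> tensors" "y \<in> tensors" for x y
    using two_op_ideal_free_tensors[of m mul n br] that fsc_subspace_free_tensors
    unfolding two_op_ideal_def by (blast intro: fsc_subspace_add)
  moreover have "tensor_relations smul m \<subseteq> tensors"
    unfolding tensor_relations_def
    by (auto intro!: fsc_subspace_diff[OF fsc_subspace_free_tensors]
        fsc_subspace_fsc[OF fsc_subspace_free_tensors])
  ultimately show ?thesis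
    unfolding J_ideal_def n_minus_one
    by (intro two_op_ideal_generated_ideal two_op_ideal_free_tensors) blast
qed

lemma fsc_subspace_J: "fsc_subspace \<J>"
  using two_op_ideal_J by (rule two_op_ideal_fsc_subspace)

lemma generators_in_J:
  "tensor_relations smul m \<union> {B x y + B y x | x y. x \<in> tensors \<and> y \<in> tensors} \<subseteq> \<J>"
  unfolding J_ideal_def n_minus_one by (rule generated_ideal_superset)

lemma skew_in_J: "x \<in> tensors \<Longrightarrow> y \<in> tensors \<Longrightarrow> B x y + B y x \<in> \<J>"
  using generators_in_J by blast

lemma bas_update_add_in_J:
  assumes "length xs = m" "i < m"
  shows "bas (xs[i := u + v]) - bas (xs[i := u]) - bas (xs[i := v]) \<in> \<J>"
proof -
  have "bas (xs[i := u + v]) - bas (xs[i := u]) - bas (xs[i := v]) \<in> tensor_relations smul m"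
    unfolding tensor_relations_def using assms by blast
  then show ?thesis
    using generators_in_J by blast
qed

lemma bas_update_sum_in_J:
  assumes "length xs = m" "i < m"
  shows "bas (xs[i := \<Sum>k\<in>S. g k]) - (\<Sum>k\<in>S. bas (xs[i := g k])) \<in> \<J>"
proof -
  have zero: "bas (xs[i := 0]) \<in> \<J>"
    using fsc_subspace_neg[OF fsc_subspace_J bas_update_add_in_J[OF assms, of 0 0]] by simp
  show ?thesis
  proof (induction S rule: infinite_finite_induct)
    case (insert a S)
    have "bas (xs[i := \<Sum>k\<in>insert a S. g k]) - (\<Sum>k\<in>insert a S. bas (xs[i := g k])) =
       (bas (xs[i := g a + (\<Sum>k\<in>S. g k)]) - bas (xs[i := g a]) - bas (xs[i := \<Sum>k\<in>S. g k]))
       + (bas (xs[i := \<Sum>k\<in>S. g k]) - (\<Sum>k\<in>S. bas (xs[i := g k])))"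
      using insert.hyps by simp
    also have "\<dots> \<in> \<J>"
      by (rule fsc_subspace_add[OF fsc_subspace_J bas_update_add_in_J[OF assms] insert.IH])
    finally show ?case .
  qed (simp_all add: zero)
qed

lemma tbr_leibniz_bas:
  assumes xs: "length xs = m" and ys: "length ys = m" and ws: "length ws = m"
  shows "B (bas xs) (T (bas ys) (bas ws))
      - (T (B (bas xs) (bas ys)) (bas ws) + T (bas ys) (B (bas xs) (bas ws))) \<in> \<J>"
proof -
  define p where "p = map2 mul ys ws"
  define u where "u i = mul (ad xs (ys ! i)) (ws ! i)" for i
  define v where "v i = mul (ys ! i) (ad xs (ws ! i))" for i
  have p_length: "length p = m"
    using ys ws by (simp add: p_def)
  have "B (bas xs) (T (bas ys) (bas ws)) = slotwise (ad xs) p"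
    by (simp add: tprod_bas tbr_bas p_length flip: p_def)
  also have "\<dots> = (\<Sum>i<m. bas (p[i := u i + v i]))"
  proof -
    have "ad xs (p ! i) = u i + v i" if "i < m" for i
      using that ys ws
      by (simp add: p_def u_def v_def leibniz_last[OF xs] mul_commute[of "ws ! i"] add.commute)
    then show ?thesis
      unfolding slotwise_def p_length by simp
  qed
  finally have lhs: "B (bas xs) (T (bas ys) (bas ws)) = (\<Sum>i<m. bas (p[i := u i + v i]))" .
  have "T (B (bas xs) (bas ys)) (bas ws) = (\<Sum>i<m. bas (map2 mul (ys[i := ad xs (ys ! i)]) ws))"
    by (simp add: tbr_bas ys slotwise_def tprod_linear tprod_bas)
  also have "\<dots> = (\<Sum>i<m. bas (p[i := u i]))"
    by (intro sum.cong refl) (simp add: map2_update_left ys ws p_def u_def)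
  finally have rhs1: "T (B (bas xs) (bas ys)) (bas ws) = (\<Sum>i<m. bas (p[i := u i]))" .
  have "T (bas ys) (B (bas xs) (bas ws)) = (\<Sum>i<m. bas (map2 mul ys (ws[i := ad xs (ws ! i)])))"
    by (simp add: tbr_bas ws slotwise_def tprod_linear tprod_bas)
  also have "\<dots> = (\<Sum>i<m. bas (p[i := v i]))"
    by (intro sum.cong refl) (simp add: map2_update_right ys ws p_def v_def)
  finally have rhs2: "T (bas ys) (B (bas xs) (bas ws)) = (\<Sum>i<m. bas (p[i := v i]))" .
  have "B (bas xs) (T (bas ys) (bas ws))
      - (T (B (bas xs) (bas ys)) (bas ws) + T (bas ys) (B (bas xs) (bas ws)))
     = (\<Sum>i<m. bas (p[i := u i + v i]) - bas (p[i := u i]) - bas (p[i := v i]))"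
    by (simp add: lhs rhs1 rhs2 sum_subtractf sum.distrib diff_diff_eq)
  also have "\<dots> \<in> \<J>"
    using p_length by (intro fsc_subspace_sum[OF fsc_subspace_J] bas_update_add_in_J) auto
  finally show ?thesis .
qed

lemma tbr_derivation_bas:
  assumes xs: "length xs = m" and ys: "length ys = m" and ws: "length ws = m"
  shows "B (bas xs) (B (bas ys) (bas ws)) - B (B (bas xs) (bas ys)) (bas ws)
      - B (bas ys) (B (bas xs) (bas ws)) \<in> \<J>"
proof -
  define c where "c k = ys[k := ad xs (ys ! k)]" for k
  have "B (bas xs) (B (bas ys) (bas ws)) - B (bas ys) (B (bas xs) (bas ws))
      = (\<Sum>i<m. slotwise (ad xs) (ws[i := ad ys (ws ! i)])) - (\<Sum>i<m. slotwise (ad ys) (ws[i := ad xs (ws ! i)]))"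
    by (simp add: tbr_bas ws slotwise_def[of _ ws] tbr_linear)
  also have "\<dots> = (\<Sum>i<m. bas (ws[i := ad xs (ad ys (ws ! i))]) - bas (ws[i := ad ys (ad xs (ws ! i))]))"
    using slotwise_commutator[where f = "ad xs" and g = "ad ys" and ws = ws] ws by simp
  finally have commutator: "B (bas xs) (B (bas ys) (bas ws)) - B (bas ys) (B (bas xs) (bas ws))
      = (\<Sum>i<m. bas (ws[i := ad xs (ad ys (ws ! i))]) - bas (ws[i := ad ys (ad xs (ws ! i))]))" .
  have "B (B (bas xs) (bas ys)) (bas ws) = (\<Sum>k<m. \<Sum>i<m. bas (ws[i := ad (c k) (ws ! i)]))"
    by (simp add: tbr_bas ys ws slotwise_def tbr_linear c_def)
  also have "\<dots> = (\<Sum>i<m. \<Sum>k<m. bas (ws[i := ad (c k) (ws ! i)]))"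
    by (rule sum.swap)
  finally have inner:
    "B (B (bas xs) (bas ys)) (bas ws) = (\<Sum>i<m. \<Sum>k<m. bas (ws[i := ad (c k) (ws ! i)]))" .
  have slot: "bas (ws[i := ad xs (ad ys (ws ! i))]) - bas (ws[i := ad ys (ad xs (ws ! i))])
      - (\<Sum>k<m. bas (ws[i := ad (c k) (ws ! i)])) \<in> \<J>" if "i < m" for i
  proof -
    define S where "S = (\<Sum>k<m. ad (c k) (ws ! i))"
    define R where "R = ad ys (ad xs (ws ! i))"
    have "ad xs (ad ys (ws ! i)) = S + R"
      unfolding S_def R_def c_def by (rule fundamental_identity_last[OF xs ys])
    then have "bas (ws[i := ad xs (ad ys (ws ! i))]) - bas (ws[i := ad ys (ad xs (ws ! i))])
        - (\<Sum>k<m. bas (ws[i := ad (c k) (ws ! i)]))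
      = (bas (ws[i := S + R]) - bas (ws[i := S]) - bas (ws[i := R]))
        + (bas (ws[i := S]) - (\<Sum>k<m. bas (ws[i := ad (c k) (ws ! i)])))"
      by (simp add: R_def)
    also have "\<dots> \<in> \<J>"
      unfolding S_def using ws that
      by (intro fsc_subspace_add[OF fsc_subspace_J] bas_update_add_in_J bas_update_sum_in_J) auto
    finally show ?thesis .
  qed
  have "B (bas xs) (B (bas ys) (bas ws)) - B (B (bas xs) (bas ys)) (bas ws)
        - B (bas ys) (B (bas xs) (bas ws))
      = (B (bas xs) (B (bas ys) (bas ws)) - B (bas ys) (B (bas xs) (bas ws)))
        - B (B (bas xs) (bas ys)) (bas ws)"
    by (rule diff_right_commute)
  also have "\<dots> = (\<Sum>i<m. bas (ws[i := ad xs (ad ys (ws ! i))]) - bas (ws[i := ad ys (ad xs (ws ! i))])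
      - (\<Sum>k<m. bas (ws[i := ad (c k) (ws ! i)])))"
    unfolding commutator inner by (simp only: sum_subtractf)
  also have "\<dots> \<in> \<J>"
    using slot by (intro fsc_subspace_sum[OF fsc_subspace_J]) auto
  finally show ?thesis .
qed

lemma tbr_leibniz:
  assumes "x \<in> tensors" "y \<in> tensors" "w \<in> tensors"
  shows "B x (T y w) - (T (B x y) w + T y (B x w)) \<in> \<J>"
proof (rule fsc_trilinear_mem_free_tensors[OF fsc_subspace_J, where
      E = "\<lambda>x y w. B x (T y w) - (T (B x y) w + T y (B x w))", OF _ _ _ assms])
  show "fsc_linear (\<lambda>x. B x (T y w) - (T (B x y) w + T y (B x w)))" for y w
    unfolding fsc_linear_def by (simp add: tprod_linear tbr_linear fsc_diff_right fsc_add_right)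
  show "fsc_bilinear (\<lambda>y w. B x (T y w) - (T (B x y) w + T y (B x w)))" for x
    unfolding fsc_bilinear_def fsc_linear_def
    by (simp add: tprod_linear tbr_linear fsc_diff_right fsc_add_right)
qed (rule tbr_leibniz_bas)

lemma tbr_derivation:
  assumes "x \<in> tensors" "y \<in> tensors" "w \<in> tensors"
  shows "B x (B y w) - B (B x y) w - B y (B x w) \<in> \<J>"
proof (rule fsc_trilinear_mem_free_tensors[OF fsc_subspace_J, where
      E = "\<lambda>x y w. B x (B y w) - B (B x y) w - B y (B x w)", OF _ _ _ assms])
  show "fsc_linear (\<lambda>x. B x (B y w) - B (B x y) w - B y (B x w))" for y w
    unfolding fsc_linear_def by (simp add: tbr_linear fsc_diff_right)
  show "fsc_bilinear (\<lambda>y w. B x (B y w) - B (B x y) w - B y (B x w))" for x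
    unfolding fsc_bilinear_def fsc_linear_def by (simp add: tbr_linear fsc_diff_right)
qed (rule tbr_derivation_bas)

lemma tbr_jacobi:
  assumes x: "x \<in> tensors" and y: "y \<in> tensors" and w: "w \<in> tensors"
  shows "B x (B y w) + (B y (B w x) + B w (B x y)) \<in> \<J>"
proof -
  have "B x (B y w) + (B y (B w x) + B w (B x y)) =
      (B x (B y w) - B (B x y) w - B y (B x w)) + (B (B x y) w + B w (B x y)) + B y (B x w + B w x)"
    by (simp add: tbr_linear)
  also have "\<dots> \<in> \<J>"
  proof -
    have "B x y \<in> tensors" and absorbed: "B y (B x w + B w x) \<in> \<J>"
      using two_op_ideal_free_tensors[of m mul n br] two_op_ideal_J skew_in_J[OF x w] x y
      unfolding two_op_ideal_def by blast+
    then have "B (B x y) w + B w (B x y) \<in> \<J>"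
      using skew_in_J w by blast
    with tbr_derivation[OF x y w] absorbed show ?thesis
      by (intro fsc_subspace_add[OF fsc_subspace_J, OF fsc_subspace_add[OF fsc_subspace_J]])
  qed
  finally show ?thesis .
qed

lemma two_op_quotient: "two_op_quotient tensors \<J> T B"
  by (intro two_op_quotient.intro two_op_ideal_free_tensors two_op_ideal_J
      fsc_bilinear_tprod fsc_bilinear_tbr)

lemma quotient_poisson_algebra:
  "poisson_algebra_on (quot tensors \<J>) (coset \<J> 0) (qop2 \<J> (+)) (qneg \<J>) (qsc \<J>) (qop2 \<J> T) (qop2 \<J> B)"
proof (rule two_op_quotient.poisson_algebra_on_quot[OF two_op_quotient])
  show "T x y - T y x \<in> \<J>" for x y
    by (simp add: tprod_commute[OF mul_commute] fsc_subspace_0[OF fsc_subspace_J])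
  show "T (T x y) w - T x (T y w) \<in> \<J>" if "x \<in> tensors" "y \<in> tensors" "w \<in> tensors" for x y w
    by (simp add: tprod_assoc[OF mul_assoc that] fsc_subspace_0[OF fsc_subspace_J])
qed (simp_all add: skew_in_J tbr_jacobi tbr_leibniz)

end

theorem proposition4p5:
  fixes smul :: "'k::field \<Rightarrow> 'p::ab_group_add \<Rightarrow> 'p"
    and mul :: "'p \<Rightarrow> 'p \<Rightarrow> 'p"
    and br :: "'p list \<Rightarrow> 'p"
    and n :: nat
  assumes "n \<ge> 2"
    and "poisson_nlie smul mul n br"
  defines "A \<equiv> free_tensors (n - 1) :: ('p list \<Rightarrow>\<^sub>0 'k) set"
    and "J \<equiv> J_ideal smul mul n br"
  shows "(\<forall>x\<in>A. \<forall>x'\<in>A. \<forall>y\<in>A. \<forall>y'\<in>A. x - x' \<in> J \<longrightarrow> y - y' \<in> J \<longrightarrow>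
            tprod mul x y - tprod mul x' y' \<in> J \<and> tbr n br x y - tbr n br x' y' \<in> J)
       \<and> poisson_algebra_on (quot A J) (coset J 0) (qop2 J (+)) (qneg J) (qsc J)
           (qop2 J (tprod mul)) (qop2 J (tbr n br))"
proof -
  interpret poisson_nlie_tensors smul mul br n "n - 1"
    using assms(1,2) by unfold_locales auto
  interpret quotient:
    two_op_quotient "free_tensors (n - 1)" "J_ideal smul mul n br" "tprod mul" "tbr n br"
    by (rule two_op_quotient)
  show ?thesis
    unfolding A_def J_def
    using quotient.mul_congruence quotient.br_congruence quotient_poisson_algebra by blast
qed

end
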